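(* Let $R\subseteq S$ be as in the context, let $n=n_1+\cdots+n_\ell$ with $n_i$ positive integers, and let $\mathcal{C}\subseteq S^n$ be any code (linear or not) with at least two elements. Setting $k=\log_{|S|}|\mathcal{C}|$, we have ${\rm d}_{SR}(\mathcal{C})\le n-k+1$, where ${\rm d}_{SR}$ is the sum-rank distance over $R$ for the length partition $n=n_1+\cdots+n_\ell$.
   Context: $R$ is a finite commutative chain ring with maximal ideal $\mathfrak{m}$; $S=R[x]/(h)$ with $h\in R[x]$ monic of degree $m$ irreducible modulo $\mathfrak{m}$, a free $R$-module of rank $m$. Rank: for $\mathbf{u}\in S^s$, fix an $R$-basis $\alpha_1,\ldots,\alpha_m$ of $S$ and write $\mathbf{u}=\sum_{i=1}^m\alpha_i(c_{i,1},\ldots,c_{i,s})$ with $c_{i,j}\in R$; ${\rm rk}(\mathbf{u})$ is the number of nonzero diagonal entries in the Smith normal form of $(c_{i,j})\in R^{m\times s}$ (independent of the basis). For $\mathbf{c}=(\mathbf{c}^{(1)},\ldots,\mathbf{c}^{(\ell)})\in S^n$ with $\mathbf{c}^{(i)}\in S^{n_i}$, ${\rm wt}_{SR}(\mathbf{c})=\sum_i{\rm rk}(\mathbf{c}^{(i)})$; ${\rm d}_{SR}(\mathbf{c},\mathbf{d})={\rm wt}_{SR}(\mathbf{c}-\mathbf{d})$; ${\rm d}_{SR}(\mathcal{C})$ is the minimum of ${\rm d}_{SR}(\mathbf{c},\mathbf{d})$ over distinct $\mathbf{c},\mathbf{d}\in\mathcal{C}$. *)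

theory Defs
  imports "HOL-Computational_Algebra.Polynomial" "Jordan_Normal_Form.Matrix"
begin

definition cr_ideal :: "'a::comm_ring_1 set \<Rightarrow> bool" where
  "cr_ideal I \<longleftrightarrow> 0 \<in> I \<and> (\<forall>a\<in>I. \<forall>b\<in>I. a + b \<in> I) \<and> (\<forall>a\<in>I. \<forall>r. r * a \<in> I)"

definition cr_maximal_ideal :: "'a::comm_ring_1 set \<Rightarrow> bool" where
  "cr_maximal_ideal M \<longleftrightarrow> cr_ideal M \<and> M \<noteq> UNIV \<and>
     (\<forall>J. cr_ideal J \<longrightarrow> M \<subseteq> J \<longrightarrow> J = M \<or> J = UNIV)"

definition finite_chain_ring :: "'a::comm_ring_1 itself \<Rightarrow> bool" where
  "finite_chain_ring _ \<longleftrightarrow> finite (UNIV :: 'a set) \<and>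
     (\<forall>I J :: 'a set. cr_ideal I \<longrightarrow> cr_ideal J \<longrightarrow> I \<subseteq> J \<or> J \<subseteq> I)"

(* reduction modulo M of a polynomial is a unit of (R/M)[x], i.e. a nonzero constant *)
definition red_unit :: "'a::comm_ring_1 set \<Rightarrow> 'a poly \<Rightarrow> bool" where
  "red_unit M f \<longleftrightarrow> coeff f 0 \<notin> M \<and> (\<forall>i\<ge>1. coeff f i \<in> M)"

(* reduction modulo M of h is irreducible in (R/M)[x] *)
definition irreducible_mod :: "'a::comm_ring_1 set \<Rightarrow> 'a poly \<Rightarrow> bool" where
  "irreducible_mod M h \<longleftrightarrow>
     (\<exists>i. coeff h i \<notin> M) \<and> \<not> red_unit M h \<and>
     (\<forall>f g. (\<forall>i. coeff (h - f * g) i \<in> M) \<longrightarrow> red_unit M f \<or> red_unit M g)"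

(* S = R[x]/(h), elements represented by their canonical representatives of degree < deg h *)
definition S_set :: "'a::comm_ring_1 poly \<Rightarrow> 'a poly set" where
  "S_set h = {p. degree p < degree h}"

(* S^n: words indexed by 0..n-1, zero outside *)
definition S_words :: "'a::comm_ring_1 poly \<Rightarrow> nat \<Rightarrow> (nat \<Rightarrow> 'a poly) set" where
  "S_words h n = {c. (\<forall>j<n. c j \<in> S_set h) \<and> (\<forall>j\<ge>n. c j = 0)}"

definition snf_rank :: "'a::comm_ring_1 mat \<Rightarrow> nat \<Rightarrow> bool" where
  "snf_rank A r \<longleftrightarrow> (\<exists>P Q D.
     P \<in> carrier_mat (dim_row A) (dim_row A) \<and> invertible_mat P \<and>
     Q \<in> carrier_mat (dim_col A) (dim_col A) \<and> invertible_mat Q \<and>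
     D = P * A * Q \<and>
     (\<forall>i j. i < dim_row A \<longrightarrow> j < dim_col A \<longrightarrow> i \<noteq> j \<longrightarrow> D $$ (i, j) = 0) \<and>
     (\<forall>i. Suc i < min (dim_row A) (dim_col A) \<longrightarrow> D $$ (i, i) dvd D $$ (Suc i, Suc i)) \<and>
     r = card {i. i < min (dim_row A) (dim_col A) \<and> D $$ (i, i) \<noteq> 0})"

definition mat_rank :: "'a::comm_ring_1 mat \<Rightarrow> nat" where
  "mat_rank A = (THE r. snf_rank A r)"

(* coefficient matrix of u = (u a, ..., u (a+s-1)) in S^s w.r.t. the R-basis 1, x, ..., x^(m-1) *)
definition coeff_mat :: "nat \<Rightarrow> (nat \<Rightarrow> 'a::comm_ring_1 poly) \<Rightarrow> nat \<Rightarrow> nat \<Rightarrow> 'a mat" where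
  "coeff_mat m u a s = mat m s (\<lambda>(i, j). coeff (u (a + j)) i)"

definition rk_block :: "nat \<Rightarrow> (nat \<Rightarrow> 'a::comm_ring_1 poly) \<Rightarrow> nat \<Rightarrow> nat \<Rightarrow> nat" where
  "rk_block m u a s = mat_rank (coeff_mat m u a s)"

definition wt_SR :: "nat \<Rightarrow> nat list \<Rightarrow> (nat \<Rightarrow> 'a::comm_ring_1 poly) \<Rightarrow> nat" where
  "wt_SR m ns c = (\<Sum>b<length ns. rk_block m c (sum_list (take b ns)) (ns ! b))"

definition d_SR :: "nat \<Rightarrow> nat list \<Rightarrow> (nat \<Rightarrow> 'a::comm_ring_1 poly) \<Rightarrow> (nat \<Rightarrow> 'a poly) \<Rightarrow> nat" where
  "d_SR m ns c d = wt_SR m ns (\<lambda>j. c j - d j)"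

definition d_SR_code :: "nat \<Rightarrow> nat list \<Rightarrow> (nat \<Rightarrow> 'a::comm_ring_1 poly) set \<Rightarrow> nat" where
  "d_SR_code m ns C = Min {d_SR m ns c d | c d. c \<in> C \<and> d \<in> C \<and> c \<noteq> d}"

end

theory Submission
  imports Defs "Jordan_Normal_Form.Determinant" "Jordan_Normal_Form.Column_Operations"
begin

text \<open>In a chain ring divisibility is a total preorder, which gives two facts. First, every
  matrix over the ring has a Smith normal form (pivot on an entry dividing all others and
  clear its row and column), so the rank \<open>rk\<close> is well defined. Second, the ring is local:
  a sum of non-units is a non-unit, and a determinant expansion shows that the number of
  nonzero Smith invariants is at most the number of nonzero columns. Hence \<open>rk\<close> of a block
  is bounded by its Hamming weight, and the sum-rank distance by the Hamming distance. The
  Singleton bound then follows by puncturing: distinct codewords still differ among the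
  first \<open>n + 1 - d\<close> coordinates, so \<open>|C| \<le> |S| ^ (n + 1 - d)\<close>.\<close>

section \<open>Rings with totally ordered divisibility\<close>

lemma finite_chain_ring_dvd_total:
  assumes "finite_chain_ring TYPE('a::comm_ring_1)"
  shows "(x::'a) dvd y \<or> y dvd x"
proof -
  have principal: "cr_ideal (range (\<lambda>r. r * z))" for z :: 'a
    unfolding cr_ideal_def
  proof (intro conjI ballI allI)
    show "0 \<in> range (\<lambda>r. r * z)" by (metis mult_zero_left rangeI)
  next
    fix a b assume "a \<in> range (\<lambda>r. r * z)" "b \<in> range (\<lambda>r. r * z)"
    then show "a + b \<in> range (\<lambda>r. r * z)" by (auto simp: distrib_right[symmetric])
  next
    fix a r assume "a \<in> range (\<lambda>r. r * z)"
    then show "r * a \<in> range (\<lambda>r. r * z)" by (auto simp: mult.assoc[symmetric])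
  qed
  have "range (\<lambda>r. r * x) \<subseteq> range (\<lambda>r. r * y) \<or>
      range (\<lambda>r. r * y) \<subseteq> range (\<lambda>r. r * x)"
    using assms principal unfolding finite_chain_ring_def by blast
  moreover have "z \<in> range (\<lambda>r. r * z)" for z :: 'a by (metis mult_1 rangeI)
  ultimately show ?thesis by (metis dvdI mult.commute rangeE subsetD)
qed

lemma not_dvd_one_sum:
  assumes dvd_total: "\<And>x y::'a::comm_ring_1. x dvd y \<or> y dvd x"
    and "finite S" "\<And>i. i \<in> S \<Longrightarrow> \<not> f i dvd (1::'a)"
  shows "\<not> sum f S dvd 1"
  using assms(2,3)
proof (induction S rule: finite_induct)
  case (insert i S)
  have "\<not> x + y dvd 1" if "\<not> x dvd 1" "\<not> y dvd 1" for x y :: 'a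
  proof
    assume "x + y dvd 1"
    moreover have "x dvd x + y \<or> y dvd x + y" using dvd_total[of x y] by auto
    ultimately show False using that dvd_trans by blast
  qed
  with insert show ?case by simp
qed simp

lemma dvd_total_imp_ex_dvd_all:
  assumes dvd_total: "\<And>x y::'a::comm_ring_1. x dvd y \<or> y dvd x"
    and "finite X" "X \<noteq> {}"
  shows "\<exists>x\<in>X. \<forall>y\<in>X. (f x :: 'a) dvd f y"
  using assms(2,3)
proof (induction X rule: finite_ne_induct)
  case (insert x X)
  then obtain z where z: "z \<in> X" "\<forall>y\<in>X. f z dvd f y" by blast
  from dvd_total[of "f x" "f z"] show ?case
  proof
    assume xz: "f x dvd f z"
    have "f x dvd f y" if "y \<in> insert x X" for y
      using that z(2) dvd_trans[OF xz] by auto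
    then show ?case by blast
  next
    assume "f z dvd f x"
    then show ?case using z by blast
  qed
qed simp

section \<open>Invertible matrices and equivalence of matrices\<close>

lemma invertible_mat_iff_Units:
  assumes "(P :: 'a::semiring_1 mat) \<in> carrier_mat n n"
  shows "invertible_mat P \<longleftrightarrow> P \<in> Units (ring_mat TYPE('a) n b)"
proof
  assume "invertible_mat P"
  then obtain Q where "P * Q = 1\<^sub>m n" "Q * P = 1\<^sub>m (dim_row Q)"
    using assms unfolding invertible_mat_def inverts_mat_def by auto
  moreover from this have "Q \<in> carrier_mat n n"
    using assms by (metis carrier_matD(2) carrier_matI index_mult_mat(3) index_one_mat(3))
  ultimately show "P \<in> Units (ring_mat TYPE('a) n b)"
    using assms unfolding Units_def ring_mat_simps by auto
next
  assume "P \<in> Units (ring_mat TYPE('a) n b)"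
  then show "invertible_mat P"
    using assms unfolding Units_def ring_mat_simps invertible_mat_def inverts_mat_def
    by fastforce
qed

lemma invertible_matI:
  assumes "(P :: 'a::semiring_1 mat) \<in> carrier_mat n n" "Q \<in> carrier_mat n n"
    and "P * Q = 1\<^sub>m n" "Q * P = 1\<^sub>m n"
  shows "invertible_mat P"
  using assms unfolding invertible_mat_def inverts_mat_def by auto

lemma invertible_one_mat: "invertible_mat (1\<^sub>m n :: 'a::semiring_1 mat)"
  by (rule invertible_matI[of _ n "1\<^sub>m n"]) auto

lemma invertible_swaprows_mat:
  assumes "k < n" "l < n"
  shows "invertible_mat (swaprows_mat n k l :: 'a::semiring_1 mat)"
  by (subst invertible_mat_iff_Units[OF swaprows_mat_carrier, where b = undefined])
    (rule swaprows_mat_Unit[OF assms])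

lemma invertible_mat_mult:
  fixes P Q :: "'a::semiring_1 mat"
  assumes "P \<in> carrier_mat n n" "Q \<in> carrier_mat n n" "invertible_mat P" "invertible_mat Q"
  shows "invertible_mat (P * Q)"
proof -
  interpret semiring "ring_mat TYPE('a) n undefined" by (rule semiring_mat)
  have "P \<in> Units (ring_mat TYPE('a) n undefined)" "Q \<in> Units (ring_mat TYPE('a) n undefined)"
    using invertible_mat_iff_Units[OF assms(1), where b = undefined]
      invertible_mat_iff_Units[OF assms(2), where b = undefined] assms(3,4)
    by blast+
  then have "P * Q \<in> Units (ring_mat TYPE('a) n undefined)"
    using Units_m_closed by (simp add: ring_mat_simps)
  then show ?thesis
    using invertible_mat_iff_Units[OF mult_carrier_mat[OF assms(1,2)], where b = undefined] by blast
qed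

lemma invertible_mat_inverse:
  fixes P :: "'a::semiring_1 mat"
  assumes "P \<in> carrier_mat n n" "invertible_mat P"
  obtains Q where "Q \<in> carrier_mat n n" "invertible_mat Q" "P * Q = 1\<^sub>m n" "Q * P = 1\<^sub>m n"
proof -
  let ?R = "ring_mat TYPE('a) n undefined"
  interpret semiring ?R by (rule semiring_mat)
  have P: "P \<in> Units ?R"
    using invertible_mat_iff_Units[OF assms(1), where b = undefined] assms(2) by blast
  have "inv\<^bsub>?R\<^esub> P \<in> carrier_mat n n" using Units_inv_closed[OF P] by (simp add: ring_mat_simps)
  moreover have "invertible_mat (inv\<^bsub>?R\<^esub> P)"
    using Units_inv_Units[OF P] invertible_mat_iff_Units[OF calculation, where b = undefined] by blast
  moreover have "P * inv\<^bsub>?R\<^esub> P = 1\<^sub>m n" "inv\<^bsub>?R\<^esub> P * P = 1\<^sub>m n"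
    using Units_r_inv[OF P] Units_l_inv[OF P] by (simp_all add: ring_mat_simps)
  ultimately show ?thesis by (rule that)
qed

lemma invertible_mat_det_dvd_one:
  assumes "(P :: 'a::comm_ring_1 mat) \<in> carrier_mat n n" "invertible_mat P"
  shows "det P dvd 1"
proof -
  obtain Q where Q: "Q \<in> carrier_mat n n" "P * Q = 1\<^sub>m n"
    using invertible_mat_inverse[OF assms] by metis
  then have "det P * det Q = 1" using det_mult[OF assms(1) Q(1)] by simp
  then show ?thesis by (metis dvdI)
qed

lemma uminus_zero_mat [simp]: "- 0\<^sub>m nr nc = (0\<^sub>m nr nc :: 'a::group_add mat)"
  by (intro eq_matI) auto

lemma invertible_four_block_lower:
  assumes C: "(C :: 'a::comm_ring_1 mat) \<in> carrier_mat n k"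
  shows "invertible_mat (four_block_mat (1\<^sub>m k) (0\<^sub>m k n) C (1\<^sub>m n))"
proof (rule invertible_matI)
  note mult = mult_four_block_mat[OF one_carrier_mat zero_carrier_mat _ one_carrier_mat
      one_carrier_mat zero_carrier_mat _ one_carrier_mat]
  have inv: "C + - C = 0\<^sub>m n k" using C by (intro eq_matI) auto
  then show "four_block_mat (1\<^sub>m k) (0\<^sub>m k n) C (1\<^sub>m n) *
      four_block_mat (1\<^sub>m k) (0\<^sub>m k n) (- C) (1\<^sub>m n) = 1\<^sub>m (k + n)"
    using C by (simp add: mult[OF C uminus_carrier_mat[OF C]])
  show "four_block_mat (1\<^sub>m k) (0\<^sub>m k n) (- C) (1\<^sub>m n) *
      four_block_mat (1\<^sub>m k) (0\<^sub>m k n) C (1\<^sub>m n) = 1\<^sub>m (k + n)"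
    using C inv by (simp add: mult[OF uminus_carrier_mat[OF C] C])
qed (use C in auto)

lemma invertible_four_block_upper:
  assumes B: "(B :: 'a::comm_ring_1 mat) \<in> carrier_mat k n"
  shows "invertible_mat (four_block_mat (1\<^sub>m k) B (0\<^sub>m n k) (1\<^sub>m n))"
proof (rule invertible_matI)
  note mult = mult_four_block_mat[OF one_carrier_mat _ zero_carrier_mat one_carrier_mat
      one_carrier_mat _ zero_carrier_mat one_carrier_mat]
  have inv: "B + - B = 0\<^sub>m k n" using B by (intro eq_matI) auto
  then show "four_block_mat (1\<^sub>m k) B (0\<^sub>m n k) (1\<^sub>m n) *
      four_block_mat (1\<^sub>m k) (- B) (0\<^sub>m n k) (1\<^sub>m n) = 1\<^sub>m (k + n)"
    using B by (simp add: mult[OF B uminus_carrier_mat[OF B]])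
  show "four_block_mat (1\<^sub>m k) (- B) (0\<^sub>m n k) (1\<^sub>m n) *
      four_block_mat (1\<^sub>m k) B (0\<^sub>m n k) (1\<^sub>m n) = 1\<^sub>m (k + n)"
    using B inv by (simp add: mult[OF uminus_carrier_mat[OF B] B])
qed (use B in auto)

lemma invertible_four_block_diag:
  fixes P Q :: "'a::comm_ring_1 mat"
  assumes P: "P \<in> carrier_mat k k" "invertible_mat P" and Q: "Q \<in> carrier_mat n n" "invertible_mat Q"
  shows "invertible_mat (four_block_mat P (0\<^sub>m k n) (0\<^sub>m n k) Q)"
proof -
  obtain P' where P': "P' \<in> carrier_mat k k" "P * P' = 1\<^sub>m k" "P' * P = 1\<^sub>m k"
    using invertible_mat_inverse[OF P] by metis
  obtain Q' where Q': "Q' \<in> carrier_mat n n" "Q * Q' = 1\<^sub>m n" "Q' * Q = 1\<^sub>m n"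
    using invertible_mat_inverse[OF Q] by metis
  note mult = mult_four_block_mat[OF _ zero_carrier_mat zero_carrier_mat _
      _ zero_carrier_mat zero_carrier_mat]
  show ?thesis
  proof (rule invertible_matI)
    show "four_block_mat P (0\<^sub>m k n) (0\<^sub>m n k) Q * four_block_mat P' (0\<^sub>m k n) (0\<^sub>m n k) Q'
        = 1\<^sub>m (k + n)"
      using P Q P' Q' by (simp add: mult[OF P(1) Q(1) P'(1) Q'(1)])
    show "four_block_mat P' (0\<^sub>m k n) (0\<^sub>m n k) Q' * four_block_mat P (0\<^sub>m k n) (0\<^sub>m n k) Q
        = 1\<^sub>m (k + n)"
      using P Q P' Q' by (simp add: mult[OF P'(1) Q'(1) P(1) Q(1)])
  qed (use P Q P' Q' in auto)
qed

definition mat_equiv :: "'a::comm_ring_1 mat \<Rightarrow> 'a mat \<Rightarrow> bool" where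
  "mat_equiv A B \<longleftrightarrow> (\<exists>P Q. P \<in> carrier_mat (dim_row A) (dim_row A) \<and> invertible_mat P \<and>
     Q \<in> carrier_mat (dim_col A) (dim_col A) \<and> invertible_mat Q \<and> B = P * A * Q)"

lemma mat_equivI:
  assumes "A \<in> carrier_mat m s" "P \<in> carrier_mat m m" "invertible_mat P"
    "Q \<in> carrier_mat s s" "invertible_mat Q"
  shows "mat_equiv A (P * A * Q)"
  using assms unfolding mat_equiv_def by blast

lemma mat_equivE:
  assumes "mat_equiv A B" "A \<in> carrier_mat m s"
  obtains P Q where "P \<in> carrier_mat m m" "invertible_mat P"
    "Q \<in> carrier_mat s s" "invertible_mat Q" "B = P * A * Q"
  using assms unfolding mat_equiv_def by auto

lemma mat_equiv_carrier:
  "mat_equiv A B \<Longrightarrow> A \<in> carrier_mat m s \<Longrightarrow> B \<in> carrier_mat m s"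
  by (elim mat_equivE) auto

lemma mat_equiv_refl:
  assumes "A \<in> carrier_mat m s"
  shows "mat_equiv A A"
proof -
  have "A = 1\<^sub>m m * A * 1\<^sub>m s" using assms by simp
  then show ?thesis
    using mat_equivI[OF assms one_carrier_mat invertible_one_mat one_carrier_mat invertible_one_mat]
    by simp
qed

lemma mat_equiv_trans:
  assumes AB: "mat_equiv A B" and BC: "mat_equiv B C" and A: "A \<in> carrier_mat m s"
  shows "mat_equiv A C"
proof -
  obtain P Q where P: "P \<in> carrier_mat m m" "invertible_mat P"
    and Q: "Q \<in> carrier_mat s s" "invertible_mat Q" and B: "B = P * A * Q"
    using AB A by (rule mat_equivE)
  obtain P' Q' where P': "P' \<in> carrier_mat m m" "invertible_mat P'"
    and Q': "Q' \<in> carrier_mat s s" "invertible_mat Q'" and C: "C = P' * B * Q'"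
    using BC mat_equiv_carrier[OF AB A] by (rule mat_equivE)
  have "C = (P' * P) * A * (Q * Q')"
    using P Q P' Q' A unfolding B C
    by (simp add: assoc_mult_mat[of _ m m _ m _ s] assoc_mult_mat[of _ m m _ s _ s]
        assoc_mult_mat[of _ m s _ s _ s])
  then show ?thesis
    using mat_equivI[OF A _ invertible_mat_mult[OF P'(1) P(1) P'(2) P(2)]
        _ invertible_mat_mult[OF Q(1) Q'(1) Q(2) Q'(2)]] P Q P' Q' by simp
qed

lemma mat_equiv_sym:
  assumes AB: "mat_equiv A B" and A: "A \<in> carrier_mat m s"
  shows "mat_equiv B A"
proof -
  obtain P Q where P: "P \<in> carrier_mat m m" "invertible_mat P"
    and Q: "Q \<in> carrier_mat s s" "invertible_mat Q" and B: "B = P * A * Q"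
    using AB A by (rule mat_equivE)
  obtain P' where P': "P' \<in> carrier_mat m m" "invertible_mat P'" "P' * P = 1\<^sub>m m"
    using invertible_mat_inverse[OF P] by metis
  obtain Q' where Q': "Q' \<in> carrier_mat s s" "invertible_mat Q'" "Q * Q' = 1\<^sub>m s"
    using invertible_mat_inverse[OF Q] by metis
  have "P' * B * Q' = (P' * P) * A * (Q * Q')"
    using P(1) Q(1) P'(1) Q'(1) A unfolding B
    by (simp add: assoc_mult_mat[of _ m m _ m _ s] assoc_mult_mat[of _ m m _ s _ s]
        assoc_mult_mat[of _ m s _ s _ s])
  also have "\<dots> = A" using P'(3) Q'(3) A by simp
  finally show ?thesis using mat_equivI[OF mat_equiv_carrier[OF AB A] P'(1,2) Q'(1,2)] by simp
qed

lemma mat_equiv_dvd_entries: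
  fixes A :: "'a::comm_ring_1 mat"
  assumes "mat_equiv A B" and A: "A \<in> carrier_mat m s"
    and dvd: "\<And>i j. i < m \<Longrightarrow> j < s \<Longrightarrow> a dvd A $$ (i, j)"
    and "i < m" "j < s"
  shows "a dvd B $$ (i, j)"
proof -
  obtain P Q where P: "P \<in> carrier_mat m m" and Q: "Q \<in> carrier_mat s s" and B: "B = P * A * Q"
    using assms(1) A by (rule mat_equivE)
  define PA where "PA = P * A"
  have "a dvd PA $$ (i, k)" if "i < m" "k < s" for i k
  proof -
    have "PA $$ (i, k) = (\<Sum>l = 0..<m. P $$ (i, l) * A $$ (l, k))"
      using that P A unfolding PA_def by (simp add: scalar_prod_def)
    also have "a dvd \<dots>" by (rule dvd_sum, rule dvd_mult, rule dvd) (use that in auto)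
    finally show ?thesis .
  qed
  moreover have "B $$ (i, j) = (\<Sum>k = 0..<s. PA $$ (i, k) * Q $$ (k, j))"
    using assms(4,5) mult_carrier_mat[OF P A] Q unfolding B PA_def[symmetric]
    by (simp add: scalar_prod_def)
  ultimately show ?thesis
    using assms(4) by (simp only:) (rule dvd_sum, rule dvd_mult2, auto)
qed

lemma mat_equiv_pivot_to_corner:
  fixes A :: "'a::comm_ring_1 mat"
  assumes dvd_total: "\<And>x y::'a. x dvd y \<or> y dvd x"
    and A: "A \<in> carrier_mat (1 + m) (1 + s)"
  obtains A' where "A' \<in> carrier_mat (1 + m) (1 + s)" "mat_equiv A A'"
    and "\<And>i j. i < 1 + m \<Longrightarrow> j < 1 + s \<Longrightarrow> A' $$ (0, 0) dvd A' $$ (i, j)"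
proof -
  obtain i0 j0 where ij0: "i0 < 1 + m" "j0 < 1 + s"
    and pivot: "\<And>i j. i < 1 + m \<Longrightarrow> j < 1 + s \<Longrightarrow> A $$ (i0, j0) dvd A $$ (i, j)"
    using dvd_total_imp_ex_dvd_all[OF dvd_total, of "{0..<1 + m} \<times> {0..<1 + s}" "\<lambda>ij. A $$ ij"]
    by auto
  define A' where "A' = swapcols 0 j0 (swaprows 0 i0 A)"
  have "A' = swapcols 0 j0 (swaprows_mat (1 + m) 0 i0 * A)"
    using A ij0 unfolding A'_def by (simp add: swaprows_mat)
  also have "\<dots> = swaprows_mat (1 + m) 0 i0 * A * swaprows_mat (1 + s) 0 j0"
    by (rule swapcols_mat) (use A ij0 in auto)
  finally have "mat_equiv A A'"
    using mat_equivI[OF A swaprows_mat_carrier invertible_swaprows_mat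
        swaprows_mat_carrier invertible_swaprows_mat] ij0 by simp
  moreover have "A' $$ (0, 0) dvd A' $$ (i, j)" if "i < 1 + m" "j < 1 + s" for i j
  proof -
    have "A' $$ (0, 0) = A $$ (i0, j0)" using A ij0 unfolding A'_def by simp
    moreover have "A' $$ (i, j) = A $$ (if i = 0 then i0 else if i = i0 then 0 else i,
        if j = 0 then j0 else if j = j0 then 0 else j)"
      using A ij0 that unfolding A'_def by simp
    ultimately show ?thesis using that ij0 by (simp add: pivot)
  qed
  moreover have "A' \<in> carrier_mat (1 + m) (1 + s)" using A unfolding A'_def by simp
  ultimately show ?thesis using that by blast
qed

lemma mat_equiv_four_block_diag:
  fixes X B D :: "'a::comm_ring_1 mat"
  assumes X: "X \<in> carrier_mat k l" and B: "B \<in> carrier_mat m s" and BD: "mat_equiv B D"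
  shows "mat_equiv (four_block_mat X (0\<^sub>m k s) (0\<^sub>m m l) B)
    (four_block_mat X (0\<^sub>m k s) (0\<^sub>m m l) D)"
proof -
  obtain P Q where P: "P \<in> carrier_mat m m" "invertible_mat P"
    and Q: "Q \<in> carrier_mat s s" "invertible_mat Q" and D: "D = P * B * Q"
    using BD B by (rule mat_equivE)
  let ?P = "four_block_mat (1\<^sub>m k) (0\<^sub>m k m) (0\<^sub>m m k) P"
  let ?Q = "four_block_mat (1\<^sub>m l) (0\<^sub>m l s) (0\<^sub>m s l) Q"
  have eq: "?P * four_block_mat X (0\<^sub>m k s) (0\<^sub>m m l) B * ?Q
      = four_block_mat X (0\<^sub>m k s) (0\<^sub>m m l) D"
    using X B P Q unfolding D
    by (simp add: mult_four_block_mat[OF one_carrier_mat zero_carrier_mat zero_carrier_mat P(1)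
          X zero_carrier_mat zero_carrier_mat B]
        mult_four_block_mat[OF X zero_carrier_mat zero_carrier_mat mult_carrier_mat[OF P(1) B]
          one_carrier_mat zero_carrier_mat zero_carrier_mat Q(1)])
  have "mat_equiv (four_block_mat X (0\<^sub>m k s) (0\<^sub>m m l) B)
      (?P * four_block_mat X (0\<^sub>m k s) (0\<^sub>m m l) B * ?Q)"
    by (rule mat_equivI[of _ "k + m" "l + s",
          OF _ _ invertible_four_block_diag[OF one_carrier_mat invertible_one_mat P]
          _ invertible_four_block_diag[OF one_carrier_mat invertible_one_mat Q]])
      (use X B P(1) Q(1) in simp_all)
  then show ?thesis by (simp only: eq)
qed

lemma mat_equiv_four_block_eliminate:
  fixes X r c B :: "'a::comm_ring_1 mat"
  assumes X: "X \<in> carrier_mat k k" and r: "r \<in> carrier_mat k s"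
    and c: "c \<in> carrier_mat m k" and B: "B \<in> carrier_mat m s"
  shows "mat_equiv (four_block_mat X (X * r) (c * X) B)
    (four_block_mat X (0\<^sub>m k s) (0\<^sub>m m k) (B - c * X * r))"
proof -
  let ?L = "four_block_mat (1\<^sub>m k) (0\<^sub>m k m) (- c) (1\<^sub>m m)"
  let ?U = "four_block_mat (1\<^sub>m k) (- r) (0\<^sub>m s k) (1\<^sub>m s)"
  have Xr: "X * r \<in> carrier_mat k s" and cX: "c * X \<in> carrier_mat m k" using X r c by auto
  have "?L * four_block_mat X (X * r) (c * X) B
      = four_block_mat X (X * r) (0\<^sub>m m k) (- (c * (X * r)) + B)"
    using X r c B
    by (simp add: mult_four_block_mat[OF one_carrier_mat zero_carrier_mat uminus_carrier_mat[OF c]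
          one_carrier_mat X Xr cX B] uminus_l_inv_mat[OF cX])
  also have "\<dots> * ?U = four_block_mat X (0\<^sub>m k s) (0\<^sub>m m k) (- (c * (X * r)) + B)"
    using X r c B
    by (simp add: mult_four_block_mat[OF X Xr zero_carrier_mat _ one_carrier_mat
          uminus_carrier_mat[OF r] zero_carrier_mat one_carrier_mat] uminus_l_inv_mat[OF Xr])
  also have "- (c * (X * r)) + B = B - c * X * r"
    using X r c B by (intro eq_matI) auto
  finally have "?L * four_block_mat X (X * r) (c * X) B * ?U
    = four_block_mat X (0\<^sub>m k s) (0\<^sub>m m k) (B - c * X * r)" .
  moreover have "mat_equiv (four_block_mat X (X * r) (c * X) B)
      (?L * four_block_mat X (X * r) (c * X) B * ?U)"
    using X Xr cX B
    by (intro mat_equivI[of _ "k + m" "k + s"] invertible_four_block_lower invertible_four_block_upper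
        four_block_carrier_mat one_carrier_mat uminus_carrier_mat c r)
  ultimately show ?thesis by simp
qed

lemma mat_equiv_clear_pivot:
  fixes A :: "'a::comm_ring_1 mat"
  assumes A: "A \<in> carrier_mat (1 + m) (1 + s)"
    and pivot: "\<And>i j. i < 1 + m \<Longrightarrow> j < 1 + s \<Longrightarrow> A $$ (0, 0) dvd A $$ (i, j)"
  obtains B where "B \<in> carrier_mat m s"
    and "\<And>i j. i < m \<Longrightarrow> j < s \<Longrightarrow> A $$ (0, 0) dvd B $$ (i, j)"
    and "mat_equiv A (four_block_mat (mat 1 1 (\<lambda>_. A $$ (0, 0))) (0\<^sub>m 1 s) (0\<^sub>m m 1) B)"
proof -
  define a where "a = A $$ (0, 0)"
  define quot where "quot x = (SOME q. x = a * q)" for x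
  have quot: "a * quot (A $$ (i, j)) = A $$ (i, j)" if ij: "i < 1 + m" "j < 1 + s" for i j
  proof -
    obtain q where "A $$ (i, j) = a * q" using pivot[OF ij] unfolding a_def by (elim dvdE)
    then have "A $$ (i, j) = a * quot (A $$ (i, j))" unfolding quot_def by (rule someI)
    then show ?thesis by (rule sym)
  qed
  define X where "X = mat 1 1 (\<lambda>_. a)"
  define r where "r = mat 1 s (\<lambda>(_, j). quot (A $$ (0, Suc j)))"
  define c where "c = mat m 1 (\<lambda>(i, _). quot (A $$ (Suc i, 0)))"
  define B where "B = mat m s (\<lambda>(i, j). A $$ (Suc i, Suc j))"
  have X: "X \<in> carrier_mat 1 1" and r: "r \<in> carrier_mat 1 s" and c: "c \<in> carrier_mat m 1"
    and B: "B \<in> carrier_mat m s"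
    unfolding X_def r_def c_def B_def by auto
  have "A = four_block_mat X (X * r) (c * X) B"
  proof (rule eq_matI)
    fix i j assume "i < dim_row (four_block_mat X (X * r) (c * X) B)"
      "j < dim_col (four_block_mat X (X * r) (c * X) B)"
    then have ij: "i < 1 + m" "j < 1 + s" using X B by auto
    show "A $$ (i, j) = four_block_mat X (X * r) (c * X) B $$ (i, j)"
      using ij quot[OF ij] quot[of 0 j] quot[of i 0] X r c B
      unfolding X_def r_def c_def B_def a_def
      by (cases i; cases j) (auto simp: scalar_prod_def mult.commute)
  qed (use A X B in auto)
  then have "mat_equiv A (four_block_mat X (0\<^sub>m 1 s) (0\<^sub>m m 1) (B - c * X * r))"
    using mat_equiv_four_block_eliminate[OF X r c B] by simp
  moreover have "B - c * X * r \<in> carrier_mat m s" using c X r by (simp add: minus_carrier_mat)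
  moreover have "a dvd (B - c * X * r) $$ (i, j)" if "i < m" "j < s" for i j
    using that pivot B c X r unfolding a_def X_def B_def by (simp add: scalar_prod_def)
  ultimately show ?thesis using that unfolding X_def a_def by blast
qed

section \<open>Smith normal form\<close>

definition smith_form :: "'a::comm_ring_1 mat \<Rightarrow> bool" where
  "smith_form D \<longleftrightarrow> diagonal_mat D \<and>
     (\<forall>i. Suc i < min (dim_row D) (dim_col D) \<longrightarrow> D $$ (i, i) dvd D $$ (Suc i, Suc i))"

lemma snf_rank_iff:
  "snf_rank A r \<longleftrightarrow> (\<exists>D. mat_equiv A D \<and> smith_form D \<and>
     r = card {i. i < min (dim_row A) (dim_col A) \<and> D $$ (i, i) \<noteq> 0})"
proof -
  have "smith_form D \<longleftrightarrow>
      (\<forall>i j. i < dim_row A \<longrightarrow> j < dim_col A \<longrightarrow> i \<noteq> j \<longrightarrow> D $$ (i, j) = 0) \<and>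
      (\<forall>i. Suc i < min (dim_row A) (dim_col A) \<longrightarrow> D $$ (i, i) dvd D $$ (Suc i, Suc i))"
    if "mat_equiv A D" for D
  proof -
    have "D \<in> carrier_mat (dim_row A) (dim_col A)"
      using mat_equiv_carrier[OF that] by blast
    then show ?thesis unfolding smith_form_def diagonal_mat_def by auto
  qed
  then show ?thesis unfolding snf_rank_def mat_equiv_def by blast
qed

lemma diagonal_mat_mult_index:
  fixes D W :: "'a::comm_ring_1 mat"
  assumes "D \<in> carrier_mat m s" "diagonal_mat D" "W \<in> carrier_mat s p" "i < m" "i < s" "c < p"
  shows "(D * W) $$ (i, c) = D $$ (i, i) * W $$ (i, c)"
proof -
  have "(D * W) $$ (i, c) = (\<Sum>k\<in>{0..<s}. D $$ (i, k) * W $$ (k, c))"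
    using assms by (simp add: scalar_prod_def)
  also have "\<dots> = (\<Sum>k\<in>{0..<s}. if k = i then D $$ (i, i) * W $$ (i, c) else 0)"
    using assms unfolding diagonal_mat_def by (intro sum.cong) auto
  finally show ?thesis using assms by simp
qed

text \<open>The local-ring argument: if \<open>D\<close> had more nonzero diagonal entries than \<open>J\<close> has
  elements, every permutation would send some \<open>i\<close> with \<open>D $$ (i, i) \<noteq> 0\<close> outside \<open>J\<close>, where
  \<open>D $$ (i, i) * W $$ (i, p i) = 0\<close> forces \<open>W $$ (i, p i)\<close> to be a non-unit; then every
  term of the Leibniz expansion of \<open>det W\<close> would be a non-unit, and so would \<open>det W\<close>.\<close>
lemma card_nonzero_diag_le_card_cols:
  fixes D W :: "'a::comm_ring_1 mat"
  assumes dvd_total: "\<And>x y::'a. x dvd y \<or> y dvd x"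
    and D: "D \<in> carrier_mat m s" "diagonal_mat D"
    and W: "W \<in> carrier_mat s s" "det W dvd 1"
    and J: "J \<subseteq> {..<s}"
    and zero_cols: "\<And>i c. i < m \<Longrightarrow> c < s \<Longrightarrow> c \<notin> J \<Longrightarrow> (D * W) $$ (i, c) = 0"
  shows "card {i. i < min m s \<and> D $$ (i, i) \<noteq> 0} \<le> card J"
proof (rule ccontr)
  define I where "I = {i. i < min m s \<and> D $$ (i, i) \<noteq> 0}"
  assume "\<not> card {i. i < min m s \<and> D $$ (i, i) \<noteq> 0} \<le> card J"
  then have J_less_I: "card J < card I" unfolding I_def by simp
  have nonunit: "\<not> W $$ (i, c) dvd 1" if "i \<in> I" "c < s" "c \<notin> J" for i c
  proof
    assume "W $$ (i, c) dvd 1"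
    then obtain w where w: "W $$ (i, c) * w = 1" by (metis dvdE)
    have "i < m" "i < s" using that(1) unfolding I_def by auto
    then have "D $$ (i, i) * W $$ (i, c) = 0"
      using diagonal_mat_mult_index[OF D W(1)] zero_cols that(2,3) by metis
    with w have "D $$ (i, i) = 0" by (metis mult.assoc mult_1_right mult_zero_left)
    then show False using that unfolding I_def by simp
  qed
  have "\<not> signof p * (\<Prod>i = 0..<s. W $$ (i, p i)) dvd 1" if p: "p permutes {0..<s}" for p
  proof
    assume unit: "signof p * (\<Prod>i = 0..<s. W $$ (i, p i)) dvd 1"
    have "I \<subseteq> {0..<s}" unfolding I_def by auto
    have "\<not> p ` I \<subseteq> J"
    proof
      assume "p ` I \<subseteq> J"
      then have "card I \<le> card J"
        using card_inj_on_le[OF permutes_inj_on[OF p]] J finite_subset by blast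
      then show False using J_less_I by simp
    qed
    then obtain i where i: "i \<in> I" "p i \<notin> J" by blast
    then have "i < s" "p i < s" using \<open>I \<subseteq> {0..<s}\<close> permutes_in_image[OF p] by auto
    then have "W $$ (i, p i) dvd signof p * (\<Prod>i = 0..<s. W $$ (i, p i))"
      by (intro dvd_mult dvd_prodI) auto
    then show False using nonunit[OF i(1) \<open>p i < s\<close> i(2)] unit dvd_trans by blast
  qed
  then have "\<not> det W dvd 1"
    unfolding det_def'[OF W(1)]
    by (intro not_dvd_one_sum[OF dvd_total]) (auto simp: finite_permutations)
  then show False using W(2) by blast
qed

lemma card_nonzero_diag_le_of_zero_cols:
  fixes A :: "'a::comm_ring_1 mat"
  assumes dvd_total: "\<And>x y::'a. x dvd y \<or> y dvd x"
    and A: "A \<in> carrier_mat m s" and J: "J \<subseteq> {..<s}"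
    and zero_cols: "\<And>i c. i < m \<Longrightarrow> c < s \<Longrightarrow> c \<notin> J \<Longrightarrow> A $$ (i, c) = 0"
    and AD: "mat_equiv A D" and D: "diagonal_mat D"
  shows "card {i. i < min m s \<and> D $$ (i, i) \<noteq> 0} \<le> card J"
proof -
  obtain P Q where P: "P \<in> carrier_mat m m" and Q: "Q \<in> carrier_mat s s" "invertible_mat Q"
    and PAQ: "D = P * A * Q"
    using AD A by (rule mat_equivE)
  obtain Q' where Q': "Q' \<in> carrier_mat s s" "invertible_mat Q'" "Q * Q' = 1\<^sub>m s"
    using invertible_mat_inverse[OF Q] by metis
  have "D * Q' = P * A * (Q * Q')"
    unfolding PAQ using P A Q(1) Q'(1)
    by (simp add: assoc_mult_mat[of _ m m _ s _ s] assoc_mult_mat[of _ m s _ s _ s])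
  then have DQ': "D * Q' = P * A" using Q'(3) P A by simp
  show ?thesis
  proof (rule card_nonzero_diag_le_card_cols[OF dvd_total _ D Q'(1)
        invertible_mat_det_dvd_one[OF Q'(1,2)] J])
    show "D \<in> carrier_mat m s" using mat_equiv_carrier[OF AD A] .
    fix i c assume "i < m" "c < s" "c \<notin> J"
    then show "(D * Q') $$ (i, c) = 0"
      unfolding DQ' using P A zero_cols by (simp add: scalar_prod_def)
  qed
qed

lemma snf_rank_le_card_cols:
  fixes A :: "'a::comm_ring_1 mat"
  assumes dvd_total: "\<And>x y::'a. x dvd y \<or> y dvd x"
    and A: "A \<in> carrier_mat m s" and J: "J \<subseteq> {..<s}"
    and zero_cols: "\<And>i c. i < m \<Longrightarrow> c < s \<Longrightarrow> c \<notin> J \<Longrightarrow> A $$ (i, c) = 0"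
    and "snf_rank A r"
  shows "r \<le> card J"
  using assms(5) A card_nonzero_diag_le_of_zero_cols[OF dvd_total A J zero_cols]
  unfolding snf_rank_iff smith_form_def by auto

lemma snf_rank_unique:
  fixes A :: "'a::comm_ring_1 mat"
  assumes dvd_total: "\<And>x y::'a. x dvd y \<or> y dvd x"
    and "snf_rank A r1" "snf_rank A r2"
  shows "r1 = r2"
proof -
  have "r2 \<le> r1" if r1: "snf_rank A r1" and r2: "snf_rank A r2" for r1 r2
  proof -
    define m s where "m = dim_row A" and "s = dim_col A"
    have A: "A \<in> carrier_mat m s" unfolding m_def s_def by auto
    obtain D1 where D1: "mat_equiv A D1" "smith_form D1"
      "r1 = card {i. i < min m s \<and> D1 $$ (i, i) \<noteq> 0}"
      using r1 unfolding snf_rank_iff m_def s_def by blast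
    obtain D2 where D2: "mat_equiv A D2" "smith_form D2"
      "r2 = card {i. i < min m s \<and> D2 $$ (i, i) \<noteq> 0}"
      using r2 unfolding snf_rank_iff m_def s_def by blast
    have "card {i. i < min m s \<and> D2 $$ (i, i) \<noteq> 0}
        \<le> card {i. i < min m s \<and> D1 $$ (i, i) \<noteq> 0}"
    proof (rule card_nonzero_diag_le_of_zero_cols[OF dvd_total mat_equiv_carrier[OF D1(1) A]])
      show "mat_equiv D1 D2" using mat_equiv_trans[OF mat_equiv_sym[OF D1(1) A] D2(1)]
          mat_equiv_carrier[OF D1(1) A] by blast
      fix i c assume "i < m" "c < s" "c \<notin> {i. i < min m s \<and> D1 $$ (i, i) \<noteq> 0}"
      then show "D1 $$ (i, c) = 0"
        using D1(2) mat_equiv_carrier[OF D1(1) A] unfolding smith_form_def diagonal_mat_def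
        by (cases "i = c") auto
    qed (use D2(2) in \<open>auto simp: smith_form_def\<close>)
    then show ?thesis using D1(3) D2(3) by simp
  qed
  then show ?thesis using assms(2,3) by (meson antisym)
qed

lemma smith_form_four_block:
  fixes D :: "'a::comm_ring_1 mat"
  assumes D: "D \<in> carrier_mat m s" "smith_form D"
    and dvd: "\<And>i j. i < m \<Longrightarrow> j < s \<Longrightarrow> a dvd D $$ (i, j)"
  shows "smith_form (four_block_mat (mat 1 1 (\<lambda>_. a)) (0\<^sub>m 1 s) (0\<^sub>m m 1) D)"
  unfolding smith_form_def diagonal_mat_def
proof (intro conjI allI impI)
  let ?D = "four_block_mat (mat 1 1 (\<lambda>_. a)) (0\<^sub>m 1 s) (0\<^sub>m m 1) D"
  fix i j assume "i < dim_row ?D" "j < dim_col ?D" "i \<noteq> j"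
  then show "?D $$ (i, j) = 0"
    using D unfolding smith_form_def diagonal_mat_def by auto
next
  let ?D = "four_block_mat (mat 1 1 (\<lambda>_. a)) (0\<^sub>m 1 s) (0\<^sub>m m 1) D"
  fix i assume i: "Suc i < min (dim_row ?D) (dim_col ?D)"
  show "?D $$ (i, i) dvd ?D $$ (Suc i, Suc i)"
  proof (cases i)
    case 0
    then show ?thesis using i D dvd by simp
  next
    case (Suc k)
    then show ?thesis using i D unfolding smith_form_def by auto
  qed
qed

lemma smith_form_exists:
  fixes A :: "'a::comm_ring_1 mat"
  assumes dvd_total: "\<And>x y::'a. x dvd y \<or> y dvd x"
  shows "A \<in> carrier_mat m s \<Longrightarrow> \<exists>D. mat_equiv A D \<and> smith_form D"
proof (induction m arbitrary: s A)
  case 0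
  then have "smith_form A" unfolding smith_form_def diagonal_mat_def by simp
  then show ?case using mat_equiv_refl[OF 0] by blast
next
  case (Suc m)
  show ?case
  proof (cases s)
    case 0
    then have "smith_form A" using Suc.prems unfolding smith_form_def diagonal_mat_def by simp
    then show ?thesis using mat_equiv_refl[OF Suc.prems] by blast
  next
    case (Suc s')
    then have A: "A \<in> carrier_mat (1 + m) (1 + s')" using Suc.prems by simp
    obtain A1 where A1: "A1 \<in> carrier_mat (1 + m) (1 + s')" and AA1: "mat_equiv A A1"
      and pivot: "\<And>i j. i < 1 + m \<Longrightarrow> j < 1 + s' \<Longrightarrow> A1 $$ (0, 0) dvd A1 $$ (i, j)"
      using mat_equiv_pivot_to_corner[OF dvd_total A] by blast
    let ?X = "mat 1 1 (\<lambda>_. A1 $$ (0, 0))"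
    obtain B where B: "B \<in> carrier_mat m s'"
      and dvd: "\<And>i j. i < m \<Longrightarrow> j < s' \<Longrightarrow> A1 $$ (0, 0) dvd B $$ (i, j)"
      and A1B: "mat_equiv A1 (four_block_mat ?X (0\<^sub>m 1 s') (0\<^sub>m m 1) B)"
      using mat_equiv_clear_pivot[OF A1 pivot] by blast
    obtain D where BD: "mat_equiv B D" and D: "smith_form D" using Suc.IH[OF B] by blast
    have "mat_equiv (four_block_mat ?X (0\<^sub>m 1 s') (0\<^sub>m m 1) B)
        (four_block_mat ?X (0\<^sub>m 1 s') (0\<^sub>m m 1) D)"
      by (rule mat_equiv_four_block_diag[OF _ B BD]) simp
    then have "mat_equiv A (four_block_mat ?X (0\<^sub>m 1 s') (0\<^sub>m m 1) D)"
      using mat_equiv_trans[OF mat_equiv_trans[OF AA1 A1B] _ Suc.prems] Suc.prems by blast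
    moreover have "smith_form (four_block_mat ?X (0\<^sub>m 1 s') (0\<^sub>m m 1) D)"
      using smith_form_four_block[OF mat_equiv_carrier[OF BD B] D]
        mat_equiv_dvd_entries[OF BD B dvd] by blast
    ultimately show ?thesis by blast
  qed
qed

text \<open>\<open>mat_rank\<close> is a definite description, so it needs both the existence and the
  uniqueness of the Smith rank.\<close>
lemma snf_rank_mat_rank:
  fixes A :: "'a::comm_ring_1 mat"
  assumes dvd_total: "\<And>x y::'a. x dvd y \<or> y dvd x"
  shows "snf_rank A (mat_rank A)"
proof -
  have "A \<in> carrier_mat (dim_row A) (dim_col A)" by simp
  then obtain D where "mat_equiv A D" "smith_form D"
    using smith_form_exists[OF dvd_total] by blast
  then have r: "snf_rank A (card {i. i < min (dim_row A) (dim_col A) \<and> D $$ (i, i) \<noteq> 0})"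
    unfolding snf_rank_iff by blast
  then have "mat_rank A = card {i. i < min (dim_row A) (dim_col A) \<and> D $$ (i, i) \<noteq> 0}"
    unfolding mat_rank_def by (rule the_equality) (rule snf_rank_unique[OF dvd_total _ r])
  then show ?thesis using r by simp
qed

section \<open>Sum-rank weight and Hamming weight\<close>

lemma rk_block_le_card_nonzero:
  assumes dvd_total: "\<And>x y::'a::comm_ring_1. x dvd y \<or> y dvd x"
  shows "rk_block m (u :: nat \<Rightarrow> 'a poly) a s \<le> card {j. j < s \<and> u (a + j) \<noteq> 0}"
  unfolding rk_block_def
  by (rule snf_rank_le_card_cols[OF dvd_total _ _ _ snf_rank_mat_rank[OF dvd_total]])
    (auto simp: coeff_mat_def)

lemma card_less_add_split:
  fixes x y :: nat
  shows "card {j. j < x + y \<and> P j} = card {j. j < x \<and> P j} + card {j. j < y \<and> P (x + j)}"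
proof -
  have "{j. j < x + y \<and> P j} = {j. j < x \<and> P j} \<union> (+) x ` {j. j < y \<and> P (x + j)}"
  proof (intro equalityI subsetI)
    fix j assume j: "j \<in> {j. j < x + y \<and> P j}"
    show "j \<in> {j. j < x \<and> P j} \<union> (+) x ` {j. j < y \<and> P (x + j)}"
    proof (cases "j < x")
      case False
      then have "j = x + (j - x)" "j - x \<in> {j. j < y \<and> P (x + j)}" using j by auto
      then show ?thesis by blast
    qed (use j in simp)
  qed auto
  moreover have "card ((+) x ` {j. j < y \<and> P (x + j)}) = card {j. j < y \<and> P (x + j)}"
    by (rule card_image) simp
  moreover have "{j. j < x \<and> P j} \<inter> (+) x ` {j. j < y \<and> P (x + j)} = {}" by auto
  ultimately show ?thesis by (simp add: card_Un_disjoint)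
qed

lemma sum_card_blocks:
  fixes ns :: "nat list" and a :: nat
  shows "(\<Sum>b<length ns. card {j. j < ns ! b \<and> P (a + sum_list (take b ns) + j)})
     = card {j. j < sum_list ns \<and> P (a + j)}"
proof (induction ns arbitrary: a)
  case (Cons x ns)
  have "(\<Sum>b<length (x # ns). card {j. j < (x # ns) ! b \<and> P (a + sum_list (take b (x # ns)) + j)})
      = card {j. j < x \<and> P (a + j)}
        + (\<Sum>b<length ns. card {j. j < ns ! b \<and> P ((a + x) + sum_list (take b ns) + j)})"
    by (simp only: length_Cons sum.lessThan_Suc_shift) (simp add: add.assoc)
  also have "\<dots> = card {j. j < sum_list (x # ns) \<and> P (a + j)}"
    using Cons.IH[of "a + x"] card_less_add_split[of x "sum_list ns" "\<lambda>j. P (a + j)"]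
    by (simp add: add.assoc)
  finally show ?case .
qed simp

lemma wt_SR_le_card_nonzero:
  assumes dvd_total: "\<And>x y::'a::comm_ring_1. x dvd y \<or> y dvd x"
  shows "wt_SR m ns (u :: nat \<Rightarrow> 'a poly) \<le> card {j. j < sum_list ns \<and> u j \<noteq> 0}"
proof -
  have "wt_SR m ns u
      \<le> (\<Sum>b<length ns. card {j. j < ns ! b \<and> u (0 + sum_list (take b ns) + j) \<noteq> 0})"
    unfolding wt_SR_def by (rule sum_mono) (simp add: rk_block_le_card_nonzero[OF dvd_total])
  also have "\<dots> = card {j. j < sum_list ns \<and> u j \<noteq> 0}"
    using sum_card_blocks[of ns "\<lambda>v. u v \<noteq> 0" 0] by simp
  finally show ?thesis .
qed

lemma d_SR_code_le_card_diff:
  assumes dvd_total: "\<And>x y::'a::comm_ring_1. x dvd y \<or> y dvd x"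
    and "finite C" "c \<in> C" "d \<in> C" "c \<noteq> d"
  shows "d_SR_code m ns (C :: (nat \<Rightarrow> 'a poly) set) \<le> card {j. j < sum_list ns \<and> c j \<noteq> d j}"
proof -
  have "{d_SR m ns c d | c d. c \<in> C \<and> d \<in> C \<and> c \<noteq> d}
      \<subseteq> (\<lambda>(c, d). d_SR m ns c d) ` (C \<times> C)"
    by auto
  then have "finite {d_SR m ns c d | c d. c \<in> C \<and> d \<in> C \<and> c \<noteq> d}"
    by (rule finite_subset[OF _ finite_imageI[OF finite_cartesian_product[OF assms(2) assms(2)]]])
  then have "d_SR_code m ns C \<le> d_SR m ns c d"
    unfolding d_SR_code_def using assms(3-5) by (intro Min_le) blast+
  also have "\<dots> \<le> card {j. j < sum_list ns \<and> c j \<noteq> d j}"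
    unfolding d_SR_def using wt_SR_le_card_nonzero[OF dvd_total, of m ns "\<lambda>j. c j - d j"] by simp
  finally show ?thesis .
qed

section \<open>The Singleton bound\<close>

lemma finite_S_set:
  assumes "finite (UNIV :: 'a::comm_ring_1 set)"
  shows "finite (S_set (h :: 'a poly))"
proof -
  let ?f = "\<lambda>p. restrict (coeff p) {0..<degree h}"
  have "inj_on ?f (S_set h)"
  proof (rule inj_onI, rule poly_eqI)
    fix p q i assume pq: "p \<in> S_set h" "q \<in> S_set h" "?f p = ?f q"
    show "coeff p i = coeff q i"
    proof (cases "i < degree h")
      case True
      then show ?thesis using fun_cong[OF pq(3), of i] by simp
    next
      case False
      then show ?thesis using pq(1,2) by (simp add: S_set_def coeff_eq_0)
    qed
  qed
  moreover have "?f ` S_set h \<subseteq> PiE {0..<degree h} (\<lambda>_. UNIV)" by auto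
  then have "finite (?f ` S_set h)"
    by (rule finite_subset[OF _ finite_PiE]) (use assms in auto)
  ultimately show ?thesis by (rule finite_imageD[rotated])
qed

lemma irreducible_mod_degree_pos:
  assumes "cr_maximal_ideal M" "lead_coeff h = 1" "irreducible_mod M h"
  shows "0 < degree h"
proof (rule ccontr)
  assume "\<not> 0 < degree h"
  then have "coeff h 0 = 1" "\<forall>i\<ge>1. coeff h i = 0"
    using assms(2) coeff_eq_0[of h] by auto
  moreover have "0 \<in> M" "1 \<notin> M"
  proof -
    have ideal: "cr_ideal M" "M \<noteq> UNIV" using assms(1) unfolding cr_maximal_ideal_def by simp_all
    then show "0 \<in> M" unfolding cr_ideal_def by simp
    show "1 \<notin> M"
    proof
      assume "1 \<in> M"
      then have "r * 1 \<in> M" for r using ideal(1) unfolding cr_ideal_def by blast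
      then show False using ideal(2) by auto
    qed
  qed
  ultimately have "red_unit M h" unfolding red_unit_def by simp
  then show False using assms(3) unfolding irreducible_mod_def by blast
qed

text \<open>Puncturing: under the hypothesis, two codewords agreeing on the first \<open>n + 1 - \<delta>\<close>
  coordinates differ in at most \<open>\<delta> - 1\<close> positions, hence are equal.\<close>
lemma card_le_power_of_card_diff:
  assumes S: "finite (S_set h)" "0 < degree h" and C: "C \<subseteq> S_words h n"
    and dist: "\<And>c d. c \<in> C \<Longrightarrow> d \<in> C \<Longrightarrow> c \<noteq> d \<Longrightarrow>
      \<delta> \<le> card {j. j < n \<and> c j \<noteq> d j}"
  shows "card C \<le> card (S_set h) ^ (n + 1 - \<delta>)"
proof -
  define t where "t = n + 1 - \<delta>"
  have "inj_on (\<lambda>c. restrict c {0..<t}) C"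
  proof (rule inj_onI, rule ccontr)
    fix c d assume cd: "c \<in> C" "d \<in> C" "restrict c {0..<t} = restrict d {0..<t}" "c \<noteq> d"
    then obtain j where j: "c j \<noteq> d j" by blast
    moreover have "j < n"
    proof (rule ccontr)
      assume "\<not> j < n"
      then have "c j = 0" "d j = 0" using cd(1,2) C unfolding S_words_def by auto
      then show False using j by simp
    qed
    ultimately have "{j. j < n \<and> c j \<noteq> d j} \<noteq> {}" by blast
    moreover have "{j. j < n \<and> c j \<noteq> d j} \<subseteq> {t..<n}"
    proof
      fix j assume "j \<in> {j. j < n \<and> c j \<noteq> d j}"
      moreover have "c j = d j" if "j < t" using fun_cong[OF cd(3), of j] that by simp
      ultimately show "j \<in> {t..<n}" by force
    qed
    ultimately have "0 < card {j. j < n \<and> c j \<noteq> d j}"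
      and "card {j. j < n \<and> c j \<noteq> d j} \<le> n - t"
      using card_mono[of "{t..<n}"] by (auto simp: card_gt_0_iff)
    then show False using dist[OF cd(1,2,4)] unfolding t_def by linarith
  qed
  moreover have "c j \<in> S_set h" if "c \<in> C" for c j
  proof (cases "j < n")
    case True
    then show ?thesis using that C unfolding S_words_def by auto
  next
    case False
    then have "c j = 0" using that C unfolding S_words_def by auto
    then show ?thesis using S(2) unfolding S_set_def by simp
  qed
  then have "(\<lambda>c. restrict c {0..<t}) ` C \<subseteq> PiE {0..<t} (\<lambda>_. S_set h)" by auto
  ultimately have "card C \<le> card (PiE {0..<t} (\<lambda>_. S_set h))"
    using S(1) by (intro card_inj_on_le) (auto simp: finite_PiE)
  then show ?thesis unfolding t_def by (simp add: card_PiE)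
qed

lemma log_le_of_le_power:
  assumes "2 \<le> N" "N \<le> q ^ t"
  shows "log (real q) (real N) \<le> real t"
proof -
  have "2 \<le> q"
  proof (rule ccontr)
    assume "\<not> 2 \<le> q"
    then have "q ^ t \<le> 1 ^ t" by (intro power_mono) auto
    then have "q ^ t \<le> 1" by simp
    then show False using assms by linarith
  qed
  then have "log (real q) (real N) \<le> log (real q) (real (q ^ t))"
    using assms by (subst log_le_cancel_iff) auto
  also have "\<dots> = real t" using \<open>2 \<le> q\<close> by (simp add: log_nat_power)
  finally show ?thesis .
qed

theorem proposition1:
  fixes M :: "'a::comm_ring_1 set" and h :: "'a poly" and ns :: "nat list"
    and C :: "(nat \<Rightarrow> 'a poly) set"
  assumes "finite_chain_ring TYPE('a)"
    and "cr_maximal_ideal M"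
    and "lead_coeff h = 1"
    and "irreducible_mod M h"
    and "\<forall>x\<in>set ns. x > 0"
    and "C \<subseteq> S_words h (sum_list ns)"
    and "card C \<ge> 2"
  shows "real (d_SR_code (degree h) ns C)
           \<le> real (sum_list ns) - log (real (card (S_set h))) (real (card C)) + 1"
proof -
  note dvd_total = finite_chain_ring_dvd_total[OF assms(1)]
  let ?n = "sum_list ns" and ?\<delta> = "d_SR_code (degree h) ns C"
  have "finite C" using assms(7) by (intro card_ge_0_finite) simp
  then obtain c d where cd: "c \<in> C" "d \<in> C" "c \<noteq> d"
    using assms(7) card_le_Suc0_iff_eq[of C] by force
  have dist: "?\<delta> \<le> card {j. j < ?n \<and> c j \<noteq> d j}" if "c \<in> C" "d \<in> C" "c \<noteq> d" for c d
    by (rule d_SR_code_le_card_diff[OF dvd_total \<open>finite C\<close> that])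
  have "card {j. j < ?n \<and> c j \<noteq> d j} \<le> card {..<?n}" by (rule card_mono) auto
  then have "?\<delta> \<le> ?n" using dist[OF cd] by simp
  have "finite (S_set h)"
    using assms(1) finite_S_set unfolding finite_chain_ring_def by blast
  then have "card C \<le> card (S_set h) ^ (?n + 1 - ?\<delta>)"
    using card_le_power_of_card_diff irreducible_mod_degree_pos[OF assms(2-4)] assms(6) dist
    by blast
  then have "log (real (card (S_set h))) (real (card C)) \<le> real (?n + 1 - ?\<delta>)"
    using assms(7) by (rule log_le_of_le_power[rotated])
  then show ?thesis using \<open>?\<delta> \<le> ?n\<close> by (simp add: of_nat_diff)
qed

end
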